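(* Let $K>1$ and let $\kappa=(x_i)_{i\in\mathbb Z}$ and $\eta=(y_i)_{i\in\mathbb Z}$ be independent $K$-contracting axes in a geodesic metric space $X$. Then there exists $K'>0$ such that $\operatorname{diam}\big(x_0\cup\pi_\kappa(\eta)\big)<K'$ and $\operatorname{diam}\big(x_0\cup\pi_{\{x_i\}_{i\ge0}}(\{x_i\}_{i\le0})\big)<K'$.
   Context: $X$ is a geodesic metric space. For $A\subseteq X$, $\pi_A(z)=\{a\in A:d(z,a)=d(z,A)\}$ and $\pi_A(B)=\bigcup_{b\in B}\pi_A(b)$. $A$ is $K$-contracting if $\pi_A(z)\ne\emptyset$ for all $z$ and $d(x,y)\le d(x,A)-K$ implies $\operatorname{diam}(\pi_A(x)\cup\pi_A(y))\le K$. A $K$-contracting axis indexed by $\mathbb Z$ is a sequence $(x_i)_{i\in\mathbb Z}$ with $|i-j|/K-K\le d(x_i,x_j)\le K|i-j|+K$ whose image $\{x_i\}$ is $K$-contracting; projections onto it mean onto its image. Sequences $(x_i),(y_i)$ are independent if for every $M>0$ the set $\{(n,m):d(x_n,y_m)<M\}$ is bounded. *)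

theory Defs
  imports "HOL-Analysis.Analysis"
begin

definition geodesic_space :: "'a::metric_space itself \<Rightarrow> bool" where
  "geodesic_space _ \<longleftrightarrow> (\<forall>x y::'a. \<exists>\<gamma>::real \<Rightarrow> 'a.
      \<gamma> 0 = x \<and> \<gamma> (dist x y) = y \<and>
      (\<forall>s\<in>{0..dist x y}. \<forall>t\<in>{0..dist x y}. dist (\<gamma> s) (\<gamma> t) = \<bar>s - t\<bar>))"

text \<open>Diameter with values in the extended reals (unbounded sets have diameter infinity).\<close>
definition diam :: "'a::metric_space set \<Rightarrow> ereal" where
  "diam S = (SUP p\<in>S \<times> S. ereal (dist (fst p) (snd p)))"

definition proj :: "'a::metric_space set \<Rightarrow> 'a \<Rightarrow> 'a set" where
  "proj A z = {a\<in>A. dist z a = infdist z A}"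

definition proj_set :: "'a::metric_space set \<Rightarrow> 'a set \<Rightarrow> 'a set" where
  "proj_set A B = (\<Union>b\<in>B. proj A b)"

definition contracting :: "real \<Rightarrow> 'a::metric_space set \<Rightarrow> bool" where
  "contracting K A \<longleftrightarrow> (\<forall>z. proj A z \<noteq> {}) \<and>
     (\<forall>x y. dist x y \<le> infdist x A - K \<longrightarrow> diam (proj A x \<union> proj A y) \<le> ereal K)"

definition contracting_axis :: "real \<Rightarrow> (int \<Rightarrow> 'a::metric_space) \<Rightarrow> bool" where
  "contracting_axis K x \<longleftrightarrow>
     (\<forall>i j. \<bar>real_of_int (i - j)\<bar> / K - K \<le> dist (x i) (x j) \<and>
            dist (x i) (x j) \<le> K * \<bar>real_of_int (i - j)\<bar> + K) \<and>
     contracting K (range x)"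

definition independent :: "(int \<Rightarrow> 'a::metric_space) \<Rightarrow> (int \<Rightarrow> 'a) \<Rightarrow> bool" where
  "independent x y \<longleftrightarrow> (\<forall>M>0. \<exists>B::int. \<forall>n m. dist (x n) (y m) < M \<longrightarrow> \<bar>n\<bar> \<le> B \<and> \<bar>m\<bar> \<le> B)"

end

theory Submission
  imports Defs
begin

(* A geodesic staying 3K away from A
   has projection to A of diameter at most d(start, A) + 5K (bounded geodesic image): walking
   backwards from a point at distance r from A in steps of length r - K moves the projection by
   at most K per step, and each step covers at least 2K. Consequently a geodesic whose endpoints
   are 3K-close to A stays 14K-close to A (Morse property).

   For the projection of y_m to kappa, follow a geodesic from y_0 to y_m; it stays near eta. If it
   never comes 3K-close to kappa, the projection of y_m is near that of y_0. Otherwise its last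
   3K-close point projects near the projection of y_m and is close to both axes, which by
   independence only happens boundedly far from x_0.

   For j <= 0, a geodesic from x_j to its projection x_i to the half-axis {x_k : k >= 0} stays
   near kappa. Where its projections to kappa pass from nonpositive to nonnegative indices it
   comes close to x_0; since x_i is no farther from x_j than x_0 is, x_i is close to x_0 too. *)

definition geodesic_segment :: "real \<Rightarrow> (real \<Rightarrow> 'a::metric_space) \<Rightarrow> bool" where
  "geodesic_segment L g \<longleftrightarrow> (\<forall>s\<in>{0..L}. \<forall>t\<in>{0..L}. dist (g s) (g t) = \<bar>s - t\<bar>)"

lemma geodesic_segmentD:
  "geodesic_segment L g \<Longrightarrow> s \<in> {0..L} \<Longrightarrow> t \<in> {0..L} \<Longrightarrow> dist (g s) (g t) = \<bar>s - t\<bar>"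
  unfolding geodesic_segment_def by blast

lemma geodesic_segment_reverse: "geodesic_segment L g \<Longrightarrow> geodesic_segment L (\<lambda>s. g (L - s))"
  unfolding geodesic_segment_def by auto

lemma geodesic_segment_subsegment:
  assumes "geodesic_segment L g" "0 \<le> a" "a \<le> b" "b \<le> L"
  shows "geodesic_segment (b - a) (\<lambda>s. g (a + s))"
  using assms unfolding geodesic_segment_def by auto

lemma geodesic_space_segment:
  assumes "geodesic_space TYPE('a::metric_space)"
  obtains g :: "real \<Rightarrow> 'a::metric_space"
  where "g 0 = u" "g (dist u v) = v" "geodesic_segment (dist u v) g"
  using assms unfolding geodesic_space_def geodesic_segment_def by blast

lemma infdist_geodesic_segment_le:
  assumes "geodesic_segment L g" "s \<in> {0..L}" "t \<in> {0..L}"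
  shows "infdist (g s) A \<le> infdist (g t) A + \<bar>s - t\<bar>"
  using infdist_triangle[of "g s" A "g t"] geodesic_segmentD[OF assms] by simp

lemma dist_le_diam: "a \<in> S \<Longrightarrow> b \<in> S \<Longrightarrow> ereal (dist a b) \<le> diam S"
  unfolding diam_def by (rule SUP_upper2[of "(a, b)"]) auto

lemma diam_le: "(\<And>a b. a \<in> S \<Longrightarrow> b \<in> S \<Longrightarrow> dist a b \<le> c) \<Longrightarrow> diam S \<le> ereal c"
  unfolding diam_def by (rule SUP_least) auto

lemma diam_insert_le:
  assumes "\<And>p. p \<in> S \<Longrightarrow> dist p z \<le> C" "0 \<le> C"
  shows "diam (insert z S) \<le> ereal (2 * C)"
proof (rule diam_le)
  fix a b assume "a \<in> insert z S" "b \<in> insert z S"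
  then have "dist a z \<le> C" "dist b z \<le> C" using assms by auto
  then show "dist a b \<le> 2 * C" using dist_triangle[of a b z] by (simp add: dist_commute)
qed

lemma projD:
  assumes "p \<in> proj A z"
  shows proj_mem: "p \<in> A" and dist_proj: "dist z p = infdist z A"
  using assms unfolding proj_def by auto

lemma self_in_proj: "a \<in> A \<Longrightarrow> a \<in> proj A a"
  unfolding proj_def by simp

lemma contracting_proj_nonempty:
  assumes "contracting K A"
  obtains p where "p \<in> proj A z"
  using assms unfolding contracting_def by blast

lemma contracting_proj_dist_le:
  assumes "contracting K A" "dist u w \<le> infdist u A - K" "p \<in> proj A u" "q \<in> proj A w"
  shows "dist p q \<le> K"
proof -
  have "diam (proj A u \<union> proj A w) \<le> ereal K" using assms(1,2) unfolding contracting_def by blast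
  with dist_le_diam[of p _ q] assms(3,4) show ?thesis by (meson Un_iff ereal_less_eq(3) order.trans)
qed

lemma contracting_proj_same_point_dist_le:
  assumes c: "contracting K A" and p: "p \<in> proj A z" and q: "q \<in> proj A z"
  shows "dist p q \<le> infdist z A + K"
proof (cases "K \<le> infdist z A")
  case True
  then have "dist p q \<le> K" using contracting_proj_dist_le[OF c _ p q] by simp
  then show ?thesis using infdist_nonneg[of z A] by linarith
next
  case False
  have "dist p q \<le> dist p z + dist z q" by (rule dist_triangle)
  also have "\<dots> = 2 * infdist z A" using dist_proj[OF p] dist_proj[OF q] by (simp add: dist_commute)
  finally show ?thesis using False by linarith
qed

lemma contracting_proj_along_far_geodesic:
  assumes c: "contracting K A" and K: "K > 0" and g: "geodesic_segment l g"
    and far: "\<forall>s\<in>{0<..l}. 3 * K \<le> infdist (g s) A"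
    and q: "q \<in> proj A (g 0)"
    and t: "t \<in> {0<..l}" and p: "p \<in> proj A (g t)"
  shows "2 * dist q p \<le> 2 * K + max 0 (t - infdist (g t) A + 3 * K)"
proof -
  obtain n :: nat where "t / K \<le> real n" using real_arch_simple by blast
  then have "t \<le> real n * K" using K by (simp add: field_simps)
  moreover have "\<forall>t p. t \<in> {0<..l} \<longrightarrow> t \<le> real n * K \<longrightarrow> p \<in> proj A (g t) \<longrightarrow>
      2 * dist q p \<le> 2 * K + max 0 (t - infdist (g t) A + 3 * K)"
  proof (induction n)
    case 0
    then show ?case using K by auto
  next
    case (Suc n)
    show ?case
    proof (intro allI impI)
      fix t p assume t: "t \<in> {0<..l}" and tn: "t \<le> real (Suc n) * K" and p: "p \<in> proj A (g t)"
      have dist_t0: "dist (g t) (g 0) = t" using geodesic_segmentD[OF g, of t 0] t by simp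
      let ?excess = "t - infdist (g t) A + 3 * K"
      show "2 * dist q p \<le> 2 * K + max 0 ?excess"
      proof (cases "t \<le> infdist (g t) A - K")
        case True
        then have "dist p q \<le> K" using contracting_proj_dist_le[OF c _ p q] dist_t0 by simp
        moreover have "0 \<le> max 0 ?excess" by simp
        ultimately show ?thesis using dist_commute[of p q] by linarith
      next
        case False
        text \<open>Jump back to the point at distance \<open>d(g t, A) - K\<close> from \<open>g t\<close>; as
          \<open>d(g t, A) \<ge> 3K\<close>, this moves at least \<open>2K\<close>, which pays for the extra \<open>K\<close>.\<close>
        define t' where "t' = t - infdist (g t) A + K"
        have "3 * K \<le> infdist (g t) A" using far t by blast
        moreover have "real (Suc n) * K = real n * K + K" by (simp add: algebra_simps)
        ultimately have t': "t' \<in> {0<..l}" "t' \<le> real n * K" "t' \<le> t - 2 * K"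
          using False t tn K unfolding t'_def greaterThanAtMost_iff by linarith+
        obtain p' where p': "p' \<in> proj A (g t')" using contracting_proj_nonempty[OF c] by blast
        have "dist (g t) (g t') = t - t'" using geodesic_segmentD[OF g, of t t'] t t' K by simp
        then have "dist p p' \<le> K" using contracting_proj_dist_le[OF c _ p p'] by (simp add: t'_def)
        moreover have "2 * dist q p' \<le> 2 * K + t'"
        proof -
          have "3 * K \<le> infdist (g t') A" using far t' by blast
          then have "max 0 (t' - infdist (g t') A + 3 * K) \<le> t'"
            using t' by (intro max.boundedI) auto
          moreover have "2 * dist q p' \<le> 2 * K + max 0 (t' - infdist (g t') A + 3 * K)"
            using Suc.IH t'(1,2) p' by blast
          ultimately show ?thesis by linarith
        qed
        ultimately have "2 * dist q p \<le> 4 * K + t'"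
          using dist_triangle[of q p p'] dist_commute[of p' p] by linarith
        moreover have "?excess \<le> max 0 ?excess" by simp
        ultimately show ?thesis unfolding t'_def by linarith
      qed
    qed
  qed
  ultimately show ?thesis using t p by blast
qed

theorem bounded_geodesic_image:
  assumes c: "contracting K A" and K: "K > 0" and g: "geodesic_segment l g" and l: "0 \<le> l"
    and far: "\<forall>s\<in>{0<..l}. 3 * K \<le> infdist (g s) A"
    and q: "q \<in> proj A (g 0)" and p: "p \<in> proj A (g l)"
  shows "dist q p \<le> infdist (g 0) A + 5 * K"
proof (cases "l = 0")
  case True
  then have "p \<in> proj A (g 0)" using p by simp
  then show ?thesis using contracting_proj_same_point_dist_le[OF c q] K by fastforce
next
  case False
  let ?excess = "l - infdist (g l) A + 3 * K"
  have bound: "2 * dist q p \<le> 2 * K + max 0 ?excess"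
    using contracting_proj_along_far_geodesic[OF c K g far q _ p] False l by simp
  have "l = dist (g 0) (g l)" using geodesic_segmentD[OF g, of 0 l] l by simp
  also have "\<dots> \<le> dist (g 0) q + dist q p + dist p (g l)"
    using dist_triangle[of "g 0" "g l" q] dist_triangle[of q "g l" p] by simp
  also have "\<dots> = infdist (g 0) A + dist q p + infdist (g l) A"
    using dist_proj[OF q] dist_proj[OF p] dist_commute[of p "g l"] by simp
  finally have l_le: "l \<le> infdist (g 0) A + dist q p + infdist (g l) A" .
  from bound consider "2 * dist q p \<le> 2 * K" | "2 * dist q p \<le> 2 * K + ?excess"
    by (metis max.absorb1 max.absorb2 linorder_linear add_0_right)
  then show ?thesis
  proof cases
    case 1
    then show ?thesis using infdist_nonneg[of "g 0" A] K by linarith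
  next
    case 2
    then show ?thesis using l_le by linarith
  qed
qed

lemma last_point_below:
  fixes f :: "real \<Rightarrow> real"
  assumes lip: "\<And>s s'. s \<in> {a..b} \<Longrightarrow> s' \<in> {a..b} \<Longrightarrow> f s \<le> f s' + \<bar>s - s'\<bar>"
    and s0: "s0 \<in> {a..b}" and below: "f s0 < c"
  obtains t where "t \<in> {s0..b}" "f t \<le> c" "\<And>s. s \<in> {t<..b} \<Longrightarrow> c \<le> f s"
proof -
  define T where "T = {s\<in>{a..b}. f s < c}"
  have s0T: "s0 \<in> T" using s0 below unfolding T_def by simp
  then have ne: "T \<noteq> {}" by blast
  have bdd: "bdd_above T" unfolding T_def by (rule bdd_aboveI[of _ b]) auto
  define t where "t = Sup T"
  have le_t: "s \<le> t" if "s \<in> T" for s unfolding t_def using that bdd by (rule cSup_upper)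
  have "t \<le> b" unfolding t_def using ne by (rule cSup_least) (simp add: T_def)
  then have t: "t \<in> {s0..b}" using le_t[OF s0T] by simp
  have after: "c \<le> f s" if s: "s \<in> {t<..b}" for s
  proof (rule ccontr)
    assume "\<not> c \<le> f s"
    then have "s \<in> T" using s t s0 unfolding T_def by simp
    then have "s \<le> t" by (rule le_t)
    then show False using s by simp
  qed
  have t_below: "f t \<le> c"
  proof (rule ccontr)
    assume "\<not> f t \<le> c"
    then have "t - (f t - c) < Sup T" unfolding t_def by simp
    then obtain s where s: "s \<in> T" "t - (f t - c) < s" using less_cSup_iff[OF ne bdd] by blast
    have "s \<le> t" using s(1) by (rule le_t)
    moreover have "f t \<le> f s + \<bar>t - s\<bar>" using lip[of t s] s(1) t s0 unfolding T_def by simp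
    moreover have "f s < c" using s(1) unfolding T_def by simp
    ultimately show False using s(2) by simp
  qed
  from t t_below after show ?thesis by (rule that)
qed

lemma geodesic_last_close_point:
  assumes c: "contracting K A" and K: "K > 0" and g: "geodesic_segment L g"
    and t: "t \<in> {0..L}" and s0: "s0 \<in> {0..t}" and close: "infdist (g s0) A < 3 * K"
    and pt: "pt \<in> proj A (g t)"
  obtains t1 where "t1 \<in> {0..t}" "infdist (g t1) A \<le> 3 * K"
    "\<And>p1. p1 \<in> proj A (g t1) \<Longrightarrow> dist p1 pt \<le> 8 * K"
proof -
  have lip: "\<And>s s'. s \<in> {0..t} \<Longrightarrow> s' \<in> {0..t} \<Longrightarrow>
      infdist (g s) A \<le> infdist (g s') A + \<bar>s - s'\<bar>"
    using infdist_geodesic_segment_le[OF g] t by simp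
  obtain t1 where t1: "t1 \<in> {s0..t}" "infdist (g t1) A \<le> 3 * K"
    and far: "\<And>s. s \<in> {t1<..t} \<Longrightarrow> 3 * K \<le> infdist (g s) A"
    using last_point_below[where f = "\<lambda>s. infdist (g s) A", OF lip s0 close] by blast
  have near: "dist p1 pt \<le> 8 * K" if p1: "p1 \<in> proj A (g t1)" for p1
  proof -
    have "geodesic_segment (t - t1) (\<lambda>s. g (t1 + s))"
      using geodesic_segment_subsegment[OF g] t1 s0 t by simp
    moreover have "\<forall>s\<in>{0<..t - t1}. 3 * K \<le> infdist (g (t1 + s)) A" using far by simp
    ultimately have "dist p1 pt \<le> infdist (g t1) A + 5 * K"
      using bounded_geodesic_image[OF c K, of "t - t1" "\<lambda>s. g (t1 + s)" p1 pt] p1 pt t1 by simp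
    then show ?thesis using t1 by simp
  qed
  show ?thesis by (rule that[OF _ t1(2) near]) (use t1 s0 in simp_all)
qed

theorem contracting_geodesic_stays_close:
  assumes c: "contracting K A" and K: "K > 0" and g: "geodesic_segment L g"
    and close0: "infdist (g 0) A < 3 * K" and closeL: "infdist (g L) A < 3 * K"
    and t: "t \<in> {0..L}"
  shows "infdist (g t) A \<le> 14 * K"
proof -
  obtain pt where pt: "pt \<in> proj A (g t)" using contracting_proj_nonempty[OF c] by blast
  have "0 \<in> {0..t}" using t by simp
  then obtain t1 where t1: "t1 \<in> {0..t}" "infdist (g t1) A \<le> 3 * K"
    and near1: "\<And>p. p \<in> proj A (g t1) \<Longrightarrow> dist p pt \<le> 8 * K"
    using geodesic_last_close_point[OF c K g t _ close0 pt] by blast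
  text \<open>Running the same argument along the reversed segment gives a close point \<open>t2 \<ge> t\<close>.\<close>
  have "L - t \<in> {0..L}" "0 \<in> {0..L - t}" "infdist (g (L - 0)) A < 3 * K"
    "pt \<in> proj A (g (L - (L - t)))"
    using t closeL pt by simp_all
  then obtain t2' where t2': "t2' \<in> {0..L - t}" "infdist (g (L - t2')) A \<le> 3 * K"
    and near2: "\<And>p. p \<in> proj A (g (L - t2')) \<Longrightarrow> dist p pt \<le> 8 * K"
    using geodesic_last_close_point[OF c K geodesic_segment_reverse[OF g]] by blast
  define t2 where "t2 = L - t2'"
  obtain p1 where p1: "p1 \<in> proj A (g t1)" using contracting_proj_nonempty[OF c] by blast
  obtain p2 where p2: "p2 \<in> proj A (g t2)" using contracting_proj_nonempty[OF c] by blast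
  have "t2 - t1 = dist (g t1) (g t2)"
    using geodesic_segmentD[OF g, of t1 t2] t1 t2' t unfolding t2_def by simp
  also have "\<dots> \<le> dist (g t1) p1 + dist p1 pt + dist pt p2 + dist p2 (g t2)"
    using dist_triangle[of "g t1" "g t2" p1] dist_triangle[of p1 "g t2" pt]
      dist_triangle[of pt "g t2" p2] by simp
  also have "\<dots> \<le> 22 * K"
    using dist_proj[OF p1] dist_proj[OF p2] near1[OF p1] near2[of p2] p2 t1 t2'
      dist_commute[of pt p2] dist_commute[of p2 "g t2"]
    unfolding t2_def by simp
  finally have "t2 - t1 \<le> 22 * K" .
  moreover have "infdist (g t) A \<le> infdist (g t1) A + (t - t1)"
    using infdist_geodesic_segment_le[OF g t, of t1] t1 t by simp
  moreover have "infdist (g t) A \<le> infdist (g t2) A + (t2 - t)"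
    using infdist_geodesic_segment_le[OF g t, of t2] t2' t unfolding t2_def by simp
  ultimately show ?thesis using t1 t2' unfolding t2_def by linarith
qed

lemma contracting_axis_contracting: "contracting_axis K x \<Longrightarrow> contracting K (range x)"
  unfolding contracting_axis_def by blast

lemma contracting_axis_dist_le:
  "contracting_axis K x \<Longrightarrow> dist (x i) (x j) \<le> K * \<bar>real_of_int (i - j)\<bar> + K"
  unfolding contracting_axis_def by blast

lemma contracting_axis_index_diff_le:
  assumes "contracting_axis K x" "K > 0"
  shows "\<bar>real_of_int (i - j)\<bar> \<le> K * (dist (x i) (x j) + K)"
proof -
  have "\<bar>real_of_int (i - j)\<bar> / K - K \<le> dist (x i) (x j)"
    using assms(1) unfolding contracting_axis_def by blast
  then have "\<bar>real_of_int (i - j)\<bar> / K \<le> dist (x i) (x j) + K" by linarith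
  then show ?thesis using assms(2) by (simp add: field_simps)
qed

lemma contracting_axis_dist_le_of_between:
  assumes ax: "contracting_axis K x" and K: "K > 0"
    and "n1 \<le> i" "i \<le> n2" and D: "dist (x n1) (x n2) \<le> D"
  shows "dist (x i) (x n2) \<le> K * (K * (D + K)) + K"
proof -
  have "\<bar>real_of_int (i - n2)\<bar> \<le> \<bar>real_of_int (n2 - n1)\<bar>" using assms(3,4) by simp
  also have "\<dots> \<le> K * (dist (x n2) (x n1) + K)" by (rule contracting_axis_index_diff_le[OF ax K])
  also have "\<dots> \<le> K * (D + K)" using D K by (simp add: dist_commute)
  finally have "K * \<bar>real_of_int (i - n2)\<bar> \<le> K * (K * (D + K))" using K by simp
  then show ?thesis using contracting_axis_dist_le[OF ax, of i n2] by linarith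
qed

lemma independent_proj_near_both_axes_bounded:
  assumes ind: "independent x y" and ax: "contracting_axis K x" and cy: "contracting K' (range y)"
  shows "\<exists>C. \<forall>z. infdist z (range x) \<le> M \<longrightarrow> infdist z (range y) \<le> M \<longrightarrow>
           (\<forall>p\<in>proj (range x) z. dist p (x 0) \<le> C)"
proof -
  obtain B :: int where B: "\<And>n m. dist (x n) (y m) < 2 * \<bar>M\<bar> + 1 \<Longrightarrow> \<bar>n\<bar> \<le> B"
    using ind unfolding independent_def by (metis abs_ge_zero add_pos_nonneg mult_nonneg_nonneg
        zero_le_numeral zero_less_one add.commute)
  have K: "0 \<le> K" using contracting_axis_dist_le[OF ax, of 0 0] by simp
  have "dist p (x 0) \<le> K * real_of_int B + K"
    if zx: "infdist z (range x) \<le> M" and zy: "infdist z (range y) \<le> M"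
      and p: "p \<in> proj (range x) z" for z p
  proof -
    obtain n where n: "p = x n" using proj_mem[OF p] by blast
    obtain e where e: "e \<in> proj (range y) z" using contracting_proj_nonempty[OF cy] by blast
    obtain m where m: "e = y m" using proj_mem[OF e] by blast
    have "dist (x n) (y m) \<le> dist (x n) z + dist z (y m)" by (rule dist_triangle)
    also have "\<dots> \<le> 2 * M"
      using dist_proj[OF p] dist_proj[OF e] zx zy n m dist_commute[of z p] by simp
    finally have "dist (x n) (y m) < 2 * \<bar>M\<bar> + 1" by linarith
    then have "\<bar>n\<bar> \<le> B" by (rule B)
    then have "K * \<bar>real_of_int (n - 0)\<bar> \<le> K * real_of_int B"
      using K by (intro mult_left_mono) linarith+
    then show ?thesis using contracting_axis_dist_le[OF ax, of n 0] unfolding n by linarith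
  qed
  then show ?thesis by blast
qed

lemma proj_independent_axis_bounded:
  fixes x y :: "int \<Rightarrow> 'a::metric_space"
  assumes geo: "geodesic_space TYPE('a)" and K: "K > 0"
    and ax: "contracting_axis K x" and ay: "contracting_axis K y" and ind: "independent x y"
  shows "\<exists>C. \<forall>m. \<forall>p\<in>proj (range x) (y m). dist p (x 0) \<le> C"
proof -
  define A where "A = range x"
  define E where "E = range y"
  have cA: "contracting K A" unfolding A_def by (rule contracting_axis_contracting[OF ax])
  have cE: "contracting K E" unfolding E_def by (rule contracting_axis_contracting[OF ay])
  obtain C where C: "\<And>z p. infdist z A \<le> 14 * K \<Longrightarrow> infdist z E \<le> 14 * K \<Longrightarrow> p \<in> proj A z \<Longrightarrow>
      dist p (x 0) \<le> C"
    using independent_proj_near_both_axes_bounded[OF ind ax contracting_axis_contracting[OF ay], of "14 * K"]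
    unfolding A_def E_def by blast
  have "dist p (x 0) \<le> max (C + 8 * K) (3 * dist (y 0) (x 0) + 5 * K)"
    if p: "p \<in> proj A (y m)" for m p
  proof -
    define L where "L = dist (y 0) (y m)"
    obtain g where g0: "g 0 = y 0" and gL: "g L = y m" and g: "geodesic_segment L g"
      using geodesic_space_segment[OF geo] unfolding L_def by blast
    have near_E: "infdist (g t) E \<le> 14 * K" if "t \<in> {0..L}" for t
      using contracting_geodesic_stays_close[OF cE K g _ _ that] g0 gL K unfolding E_def by simp
    show ?thesis
    proof (cases "\<exists>s\<in>{0..L}. infdist (g s) A < 3 * K")
      case True
      then obtain s0 where s0: "s0 \<in> {0..L}" "infdist (g s0) A < 3 * K" by blast
      have "L \<in> {0..L}" unfolding L_def by simp
      then obtain t1 where t1: "t1 \<in> {0..L}" "infdist (g t1) A \<le> 3 * K"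
        and near_p: "\<And>p1. p1 \<in> proj A (g t1) \<Longrightarrow> dist p1 p \<le> 8 * K"
        using geodesic_last_close_point[OF cA K g _ s0] p gL by auto
      obtain p1 where p1: "p1 \<in> proj A (g t1)" using contracting_proj_nonempty[OF cA] by blast
      have "dist p1 (x 0) \<le> C" using C[OF _ near_E[OF t1(1)] p1] t1(2) K by simp
      then have "dist p (x 0) \<le> C + 8 * K"
        using near_p[OF p1] dist_triangle[of p "x 0" p1] dist_commute[of p p1] by linarith
      then show ?thesis by simp
    next
      case False
      then have far: "\<forall>s\<in>{0<..L}. 3 * K \<le> infdist (g s) A" by (auto simp: not_less)
      obtain q where q: "q \<in> proj A (g 0)" using contracting_proj_nonempty[OF cA] by blast
      have "dist q p \<le> infdist (y 0) A + 5 * K"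
        using bounded_geodesic_image[OF cA K g _ far q] p g0 gL unfolding L_def by simp
      moreover have "infdist (y 0) A \<le> dist (y 0) (x 0)" unfolding A_def by (rule infdist_le) simp
      moreover have "dist q (y 0) = infdist (y 0) A" using dist_proj[OF q] g0 by (simp add: dist_commute)
      ultimately have "dist p (x 0) \<le> 3 * dist (y 0) (x 0) + 5 * K"
        using dist_triangle[of p "x 0" q] dist_triangle[of q "x 0" "y 0"] dist_commute[of p q]
        by linarith
      then show ?thesis by simp
    qed
  qed
  then show ?thesis unfolding A_def by blast
qed

lemma crossing_points_close:
  fixes P Q :: "real \<Rightarrow> bool"
  assumes "a \<le> b" "P a" "Q b" and PQ: "\<And>t. t \<in> {a..b} \<Longrightarrow> P t \<or> Q t" and e: "e > 0"
  obtains u v where "u \<in> {a..b}" "v \<in> {a..b}" "\<bar>u - v\<bar> \<le> e" "P u" "Q v"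
proof -
  define T where "T = {t\<in>{a..b}. P t}"
  have aT: "a \<in> T" using assms(1,2) unfolding T_def by simp
  then have ne: "T \<noteq> {}" by blast
  have bdd: "bdd_above T" unfolding T_def by (rule bdd_aboveI[of _ b]) auto
  define s where "s = Sup T"
  have le_s: "t \<le> s" if "t \<in> T" for t unfolding s_def using that bdd by (rule cSup_upper)
  have "s \<le> b" unfolding s_def using ne by (rule cSup_least) (simp add: T_def)
  have "s - e / 2 < Sup T" using e unfolding s_def by simp
  then obtain u where u: "u \<in> T" "s - e / 2 < u" using less_cSup_iff[OF ne bdd] by blast
  define v where "v = min b (s + e / 2)"
  have "Q v"
  proof (cases "v = b")
    case True
    then show ?thesis using \<open>Q b\<close> by simp
  next
    case False
    then have "v = s + e / 2" "v \<in> {a..b}"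
      using le_s[OF aT] \<open>s \<le> b\<close> e unfolding v_def by auto
    moreover have "v \<notin> T" using le_s[of v] e \<open>v = s + e / 2\<close> by fastforce
    ultimately show ?thesis using PQ unfolding T_def by blast
  qed
  moreover have "u \<in> {a..b}" "P u" using u(1) unfolding T_def by simp_all
  moreover have "v \<in> {a..b}" "\<bar>u - v\<bar> \<le> e"
    using le_s[OF u(1)] le_s[OF aT] u(2) \<open>s \<le> b\<close> assms(1) e unfolding v_def by auto
  ultimately show ?thesis using that by blast
qed

lemma dist_to_between_point_le:
  fixes a b c w :: "'a::metric_space"
  assumes closer: "dist a b \<le> dist a c" and between: "dist a b = dist a w + dist w b"
  shows "dist c b \<le> 2 * dist w c"
proof -
  have "dist w b \<le> dist w c"
    using closer between dist_triangle[of a c w] by linarith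
  then show ?thesis using dist_triangle[of c b w] dist_commute[of c w] by linarith
qed

lemma proj_half_axis_bounded:
  fixes x :: "int \<Rightarrow> 'a::metric_space"
  assumes geo: "geodesic_space TYPE('a)" and K: "K > 0" and ax: "contracting_axis K x"
  shows "\<exists>C. \<forall>j\<le>0. \<forall>p\<in>proj (x ` {0..}) (x j). dist p (x 0) \<le> C"
proof -
  define A where "A = range x"
  have cA: "contracting K A" unfolding A_def by (rule contracting_axis_contracting[OF ax])
  define C where "C = 14 * K + (K * (K * (28 * K + 1 + K)) + K)"
  have "dist p (x 0) \<le> 2 * C" if j: "j \<le> 0" and p: "p \<in> proj (x ` {0..}) (x j)" for j p
  proof -
    obtain i where i: "0 \<le> i" "p = x i" using proj_mem[OF p] by auto
    have closer: "dist (x j) (x i) \<le> dist (x j) (x 0)"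
      using dist_proj[OF p] i infdist_le[of "x 0" "x ` {0..}" "x j"] by simp
    define L where "L = dist (x j) (x i)"
    obtain g where g0: "g 0 = x j" and gL: "g L = x i" and g: "geodesic_segment L g"
      using geodesic_space_segment[OF geo] unfolding L_def by blast
    have near_A: "infdist (g t) A \<le> 14 * K" if "t \<in> {0..L}" for t
      using contracting_geodesic_stays_close[OF cA K g _ _ that] g0 gL K unfolding A_def by simp
    define P where "P t \<longleftrightarrow> (\<exists>n\<le>0. x n \<in> proj A (g t))" for t
    define Q where "Q t \<longleftrightarrow> (\<exists>n\<ge>0. x n \<in> proj A (g t))" for t
    have "P 0" "Q L" using j i g0 gL self_in_proj[of _ A] unfolding P_def Q_def A_def by auto
    moreover have "P t \<or> Q t" for t
    proof -
      obtain q where "q \<in> proj A (g t)" using contracting_proj_nonempty[OF cA] by blast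
      moreover obtain n where "q = x n" using proj_mem[OF calculation] unfolding A_def by blast
      ultimately show ?thesis unfolding P_def Q_def by (cases "n \<le> 0") auto
    qed
    ultimately obtain u v where uv: "u \<in> {0..L}" "v \<in> {0..L}" "\<bar>u - v\<bar> \<le> 1" "P u" "Q v"
      using crossing_points_close[of 0 L P Q 1] unfolding L_def by auto
    then obtain n1 n2 where n1: "n1 \<le> 0" "x n1 \<in> proj A (g u)"
      and n2: "0 \<le> n2" "x n2 \<in> proj A (g v)"
      unfolding P_def Q_def by blast
    have "dist (x n1) (x n2) \<le> dist (x n1) (g u) + dist (g u) (g v) + dist (g v) (x n2)"
      using dist_triangle[of "x n1" "x n2" "g u"] dist_triangle[of "g u" "x n2" "g v"] by simp
    also have "\<dots> \<le> 28 * K + 1"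
      using dist_proj[OF n1(2)] dist_proj[OF n2(2)] near_A[OF uv(1)] near_A[OF uv(2)]
        geodesic_segmentD[OF g uv(1,2)] uv(3) dist_commute[of "x n1" "g u"] by simp
    finally have "dist (x 0) (x n2) \<le> K * (K * (28 * K + 1 + K)) + K"
      using contracting_axis_dist_le_of_between[OF ax K n1(1) n2(1)] by blast
    moreover have "dist (g v) (x n2) \<le> 14 * K" using dist_proj[OF n2(2)] near_A[OF uv(2)] by simp
    ultimately have "dist (g v) (x 0) \<le> C"
      using dist_triangle[of "g v" "x 0" "x n2"] dist_commute[of "x 0" "x n2"] unfolding C_def
      by linarith
    moreover have "L = dist (x j) (g v) + dist (g v) (x i)"
      using geodesic_segmentD[OF g, of 0 v] geodesic_segmentD[OF g, of v L] uv(2) g0 gL by simp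
    ultimately show ?thesis
      using dist_to_between_point_le[OF closer, of "g v"] dist_commute[of "x 0" "x i"] i(2)
      unfolding L_def by simp
  qed
  then show ?thesis by blast
qed

theorem lemma3p9:
  fixes K :: real and x y :: "int \<Rightarrow> 'a::metric_space"
  assumes "geodesic_space TYPE('a)"
    and "K > 1"
    and "contracting_axis K x" and "contracting_axis K y"
    and "independent x y"
  shows "\<exists>K'>0. diam (insert (x 0) (proj_set (range x) (range y))) < ereal K' \<and>
                diam (insert (x 0) (proj_set (x ` {0..}) (x ` {..0}))) < ereal K'"
proof -
  have K: "K > 0" using \<open>K > 1\<close> by simp
  obtain C1 where C1: "\<forall>m. \<forall>p\<in>proj (range x) (y m). dist p (x 0) \<le> C1"
    using proj_independent_axis_bounded[OF assms(1) K assms(3-5)] by blast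
  obtain C2 where C2: "\<forall>j\<le>0. \<forall>p\<in>proj (x ` {0..}) (x j). dist p (x 0) \<le> C2"
    using proj_half_axis_bounded[OF assms(1) K assms(3)] by blast
  define C where "C = max 0 (max C1 C2)"
  have "diam (insert (x 0) (proj_set (range x) (range y))) \<le> ereal (2 * C)"
    using C1 by (intro diam_insert_le) (auto simp: proj_set_def C_def le_max_iff_disj)
  moreover have "diam (insert (x 0) (proj_set (x ` {0..}) (x ` {..0}))) \<le> ereal (2 * C)"
    using C2 by (intro diam_insert_le) (auto simp: proj_set_def C_def le_max_iff_disj)
  moreover have "ereal (2 * C) < ereal (2 * C + 1)" and "2 * C + 1 > 0" unfolding C_def by simp_all
  ultimately show ?thesis by (meson le_less_trans)
qed

end
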